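(* For $n\ge 2$, $g(n)\ge \left\lceil\frac{(n-1)^2+1}{2}\right\rceil$.
   Context: $K_n$ is the complete graph on $n$ vertices. A complete bipartite subgraph of a graph $G$ has two disjoint nonempty vertex classes $X,Y$ and edge set all $xy$ with $x\in X,y\in Y$. A block is a set $E(B_1)\times E(B_2)$ where $B_1,B_2$ are complete bipartite subgraphs of $K_n$; $g(n)$ is the minimum number of blocks partitioning $E(K_n)\times E(K_n)$. *)

theory Defs
  imports Complex_Main
begin

definition Kn_edges :: "nat \<Rightarrow> nat set set" where
  "Kn_edges n = {e. \<exists>x y. x < n \<and> y < n \<and> x \<noteq> y \<and> e = {x, y}}"

definition bip_edges :: "nat set \<Rightarrow> nat set \<Rightarrow> nat set set" where
  "bip_edges X Y = {{x, y} | x y. x \<in> X \<and> y \<in> Y}"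

definition is_cbs :: "nat \<Rightarrow> nat set set \<Rightarrow> bool" where
  "is_cbs n F \<longleftrightarrow> (\<exists>X Y. X \<subseteq> {..<n} \<and> Y \<subseteq> {..<n} \<and> X \<noteq> {} \<and> Y \<noteq> {}
      \<and> X \<inter> Y = {} \<and> F = bip_edges X Y)"

definition is_block :: "nat \<Rightarrow> (nat set \<times> nat set) set \<Rightarrow> bool" where
  "is_block n B \<longleftrightarrow> (\<exists>F1 F2. is_cbs n F1 \<and> is_cbs n F2 \<and> B = F1 \<times> F2)"

definition block_partition :: "nat \<Rightarrow> (nat set \<times> nat set) set set \<Rightarrow> bool" where
  "block_partition n P \<longleftrightarrow> finite P \<and> (\<forall>B\<in>P. is_block n B) \<and>
     (\<forall>B1\<in>P. \<forall>B2\<in>P. B1 \<noteq> B2 \<longrightarrow> B1 \<inter> B2 = {}) \<and>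
     \<Union>P = Kn_edges n \<times> Kn_edges n"

definition g :: "nat \<Rightarrow> nat" where
  "g n = (LEAST k. \<exists>P. block_partition n P \<and> card P = k)"

end

theory Submission
  imports Defs
begin

text \<open>
  Weight the ordered vertex pairs \<open>u = (a, b)\<close>, \<open>a, b < n\<close>, by reals \<open>v u\<close> and let
  \<open>pair_form I B v\<close> be the quadratic form \<open>\<Sum>u w. v u v w [({a, a'}, {b, b'}) \<in> B]\<close>.
  It is additive over a partition of \<open>E(K\<^sub>n) \<times> E(K\<^sub>n)\<close>, and for a block
  \<open>K(X\<^sub>1, Y\<^sub>1) \<times> K(X\<^sub>2, Y\<^sub>2)\<close> it factors as
  \<open>2 \<langle>X\<^sub>1 \<times> X\<^sub>2, v\<rangle> \<langle>Y\<^sub>1 \<times> Y\<^sub>2, v\<rangle> + 2 \<langle>X\<^sub>1 \<times> Y\<^sub>2, v\<rangle> \<langle>Y\<^sub>1 \<times> X\<^sub>2, v\<rangle>\<close>,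
  so two linear conditions on \<open>v\<close> kill it. On all of \<open>E(K\<^sub>n) \<times> E(K\<^sub>n)\<close> the form equals
  \<open>(\<Sum> v)\<^sup>2 - \<Sum> (row sums)\<^sup>2 - \<Sum> (column sums)\<^sup>2 + \<Sum> v\<^sup>2\<close>, which is
  \<open>n (n - 2) r\<^sup>2 + \<Sum> v\<^sup>2 > 0\<close> when \<open>v \<noteq> 0\<close> has all row and column sums equal to \<open>r\<close>.
  A partition into \<open>p\<close> blocks therefore yields \<open>2 p + 2 (n - 1)\<close> linear conditions without a
  common nonzero solution on \<open>n\<^sup>2\<close> unknowns, i.e. \<open>2 p \<ge> (n - 1)\<^sup>2 + 1\<close>.
\<close>

lemma underdetermined_system_nonzero_solution:
  fixes C :: "('a \<Rightarrow> 'b::field) set"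
  assumes "finite C" "finite S" "card C < card S"
  shows "\<exists>x. (\<exists>j\<in>S. x j \<noteq> 0) \<and> (\<forall>c\<in>C. (\<Sum>j\<in>S. c j * x j) = 0)"
  using assms
proof (induction "card C" arbitrary: C S rule: less_induct)
  case less
  show ?case
  proof (cases "\<exists>c\<in>C. \<exists>k\<in>S. c k \<noteq> 0")
    case False
    from less.prems obtain j where "j \<in> S" by (metis card.empty ex_in_conv less_nat_zero_code)
    with False show ?thesis by (intro exI[of _ "\<lambda>_. 1"]) auto
  next
    case True
    then obtain c k where c: "c \<in> C" and k: "k \<in> S" "c k \<noteq> 0" by blast
    define elim where "elim d = (\<lambda>j. d j - d k * c j / c k)" for d :: "'a \<Rightarrow> 'b"
    have "card (elim ` (C - {c})) < card C"
      using card_image_le[of "C - {c}" elim] less.prems c card_Diff1_less by fastforce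
    moreover have "card (elim ` (C - {c})) < card (S - {k})"
      using calculation less.prems(3) k(1) by (simp add: card_Diff_singleton less.prems(2))
    ultimately obtain x where
      x_nz: "\<exists>j\<in>S-{k}. x j \<noteq> 0" and x_sol: "\<forall>d\<in>elim ` (C - {c}). (\<Sum>j\<in>S-{k}. d j * x j) = 0"
      using less.hyps[of "elim ` (C - {c})" "S - {k}"] less.prems by blast
    define y where "y = x(k := - (\<Sum>j\<in>S-{k}. c j * x j) / c k)"
    have sum_y: "(\<Sum>j\<in>S. d j * y j) = d k * y k + (\<Sum>j\<in>S-{k}. d j * x j)" for d
      using sum.remove[OF less.prems(2) k(1), of "\<lambda>j. d j * y j"] by (simp add: y_def)
    show ?thesis
    proof (intro exI[of _ y] conjI ballI)
      show "\<exists>j\<in>S. y j \<noteq> 0" using x_nz by (auto simp: y_def)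
      fix d assume "d \<in> C"
      then consider "d = c" | "d \<in> C - {c}" by auto
      then show "(\<Sum>j\<in>S. d j * y j) = 0"
      proof cases
        case 1
        show ?thesis unfolding 1 sum_y using k by (simp add: y_def)
      next
        case 2
        then have "(\<Sum>j\<in>S-{k}. elim d j * x j) = 0" using x_sol by blast
        then have "(\<Sum>j\<in>S-{k}. d j * x j) = d k / c k * (\<Sum>j\<in>S-{k}. c j * x j)"
          by (simp add: elim_def algebra_simps sum_subtractf sum_distrib_left)
        then show ?thesis unfolding sum_y using k by (simp add: y_def field_simps)
      qed
    qed
  qed
qed

lemma sum_fiber_sums:
  fixes v :: "'a \<Rightarrow> 'b::semiring_1"
  assumes "finite I"
  shows "(\<Sum>c\<in>p ` I. \<Sum>u\<in>I. of_bool (p u = c) * v u) = sum v I"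
  using sum.group[OF assms finite_imageI[OF assms] subset_refl, of v] assms
  by (simp add: Int_def)

lemma sum_sum_of_bool_eq_fiber_squares:
  fixes v :: "'a \<Rightarrow> 'b::comm_ring_1"
  assumes "finite I"
  shows "(\<Sum>u\<in>I. \<Sum>w\<in>I. v u * v w * of_bool (p u = p w))
       = (\<Sum>c\<in>p ` I. (\<Sum>u\<in>I. of_bool (p u = c) * v u)\<^sup>2)"
proof -
  define F where "F c = (\<Sum>w\<in>I. of_bool (p w = c) * v w)" for c
  have "(\<Sum>u\<in>I. \<Sum>w\<in>I. v u * v w * of_bool (p u = p w)) = (\<Sum>u\<in>I. v u * F (p u))"
    by (simp add: F_def sum_distrib_left mult_ac eq_commute del: sum_of_bool_mult_eq)
  also have "\<dots> = (\<Sum>c\<in>p ` I. \<Sum>u\<in>I. of_bool (p u = c) * (v u * F (p u)))"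
    by (rule sum_fiber_sums[symmetric, OF assms])
  also have "\<dots> = (\<Sum>c\<in>p ` I. F c * F c)"
  proof (rule sum.cong[OF refl])
    fix c
    have "(\<Sum>u\<in>I. of_bool (p u = c) * (v u * F (p u))) = (\<Sum>u\<in>I. of_bool (p u = c) * v u * F c)"
      by (rule sum.cong) auto
    also have "\<dots> = F c * F c"
      by (simp add: F_def sum_distrib_right del: sum_of_bool_mult_eq)
    finally show "(\<Sum>u\<in>I. of_bool (p u = c) * (v u * F (p u))) = F c * F c" .
  qed
  finally show ?thesis by (simp add: F_def power2_eq_square)
qed

definition pair_form :: "(nat \<times> nat) set \<Rightarrow> (nat set \<times> nat set) set \<Rightarrow> (nat \<times> nat \<Rightarrow> real) \<Rightarrow> real"
  where "pair_form I B v = (\<Sum>u\<in>I. \<Sum>w\<in>I. v u * v w * of_bool (({fst u, fst w}, {snd u, snd w}) \<in> B))"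

lemma of_bool_mem_bip_edges:
  assumes "X \<inter> Y = {}"
  shows "(of_bool ({a, c} \<in> bip_edges X Y) :: real)
       = of_bool (a \<in> X) * of_bool (c \<in> Y) + of_bool (a \<in> Y) * of_bool (c \<in> X)"
proof -
  have "{a, c} \<in> bip_edges X Y \<longleftrightarrow> a \<in> X \<and> c \<in> Y \<or> a \<in> Y \<and> c \<in> X"
    unfolding bip_edges_def by (auto simp: doubleton_eq_iff)
  then show ?thesis using assms by auto
qed

lemma pair_form_bip_edges_times:
  assumes "X1 \<inter> Y1 = {}" "X2 \<inter> Y2 = {}"
  shows "pair_form I (bip_edges X1 Y1 \<times> bip_edges X2 Y2) v
    = 2 * (\<Sum>u\<in>I. of_bool (u \<in> X1 \<times> X2) * v u) * (\<Sum>u\<in>I. of_bool (u \<in> Y1 \<times> Y2) * v u)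
    + 2 * (\<Sum>u\<in>I. of_bool (u \<in> X1 \<times> Y2) * v u) * (\<Sum>u\<in>I. of_bool (u \<in> Y1 \<times> X2) * v u)"
proof -
  define r where "r X Y u = (of_bool (u \<in> X \<times> Y) :: real)" for X Y :: "nat set" and u
  have ind: "(of_bool (({fst u, fst w}, {snd u, snd w}) \<in> bip_edges X1 Y1 \<times> bip_edges X2 Y2) :: real)
    = r X1 X2 u * r Y1 Y2 w + r X1 Y2 u * r Y1 X2 w + r Y1 X2 u * r X1 Y2 w + r Y1 Y2 u * r X1 X2 w"
    for u w
    by (simp add: of_bool_mem_bip_edges[OF assms(1)] of_bool_mem_bip_edges[OF assms(2)]
        r_def mem_Times_iff of_bool_conj algebra_simps)
  have separate: "(\<Sum>u\<in>I. \<Sum>w\<in>I. v u * v w * (f u * g w)) = (\<Sum>u\<in>I. f u * v u) * (\<Sum>w\<in>I. g w * v w)"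
    for f g :: "nat \<times> nat \<Rightarrow> real"
    by (simp add: sum_product mult_ac)
  show ?thesis
    unfolding pair_form_def ind distrib_left sum.distrib separate
    by (simp add: r_def algebra_simps)
qed

lemma pair_form_block_kernel:
  assumes "is_block n B"
  shows "\<exists>\<alpha> \<beta>. \<forall>I v. (\<Sum>u\<in>I. \<alpha> u * v u) = 0 \<longrightarrow> (\<Sum>u\<in>I. \<beta> u * v u) = 0 \<longrightarrow> pair_form I B v = 0"
proof -
  obtain X1 Y1 X2 Y2 where "X1 \<inter> Y1 = {}" "X2 \<inter> Y2 = {}" "B = bip_edges X1 Y1 \<times> bip_edges X2 Y2"
    using assms unfolding is_block_def is_cbs_def by blast
  then show ?thesis
    by (intro exI[of _ "\<lambda>u. of_bool (u \<in> X1 \<times> X2)"] exI[of _ "\<lambda>u. of_bool (u \<in> X1 \<times> Y2)"])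
      (simp add: pair_form_bip_edges_times)
qed

lemma pair_form_Union:
  assumes "finite P" "\<forall>B1\<in>P. \<forall>B2\<in>P. B1 \<noteq> B2 \<longrightarrow> B1 \<inter> B2 = {}"
  shows "pair_form I (\<Union>P) v = (\<Sum>B\<in>P. pair_form I B v)"
proof -
  have "(of_bool (z \<in> \<Union>P) :: real) = (\<Sum>B\<in>P. of_bool (z \<in> B))" for z
  proof (cases "z \<in> \<Union>P")
    case True
    then obtain B0 where B0: "B0 \<in> P" "z \<in> B0" by auto
    with assms(2) have "P \<inter> {B. z \<in> B} = {B0}" by blast
    with True assms(1) show ?thesis by simp
  qed auto
  then show ?thesis
    unfolding pair_form_def by (simp add: sum_distrib_left sum.swap[of _ P])
qed

abbreviation grid :: "nat \<Rightarrow> (nat \<times> nat) set"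
  where "grid n \<equiv> {..<n} \<times> {..<n}"

lemma mem_Kn_edges_iff: "{a, c} \<in> Kn_edges n \<longleftrightarrow> a < n \<and> c < n \<and> a \<noteq> c"
  unfolding Kn_edges_def by (auto simp: doubleton_eq_iff)

lemma singleton_notin_Kn_edges: "{a} \<notin> Kn_edges n"
  using mem_Kn_edges_iff[of a a n] by simp

lemma pair_form_complete_graph:
  "pair_form (grid n) (Kn_edges n \<times> Kn_edges n) v
    = (\<Sum>u\<in>grid n. v u)\<^sup>2
    - (\<Sum>i<n. (\<Sum>u\<in>grid n. of_bool (fst u = i) * v u)\<^sup>2)
    - (\<Sum>j<n. (\<Sum>u\<in>grid n. of_bool (snd u = j) * v u)\<^sup>2)
    + (\<Sum>u\<in>grid n. (v u)\<^sup>2)"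
proof -
  let ?G = "grid n"
  let ?S = "\<lambda>p. \<Sum>u\<in>?G. \<Sum>w\<in>?G. v u * v w * of_bool (p u = p w)"
  have "pair_form ?G (Kn_edges n \<times> Kn_edges n) v
      = (\<Sum>u\<in>?G. \<Sum>w\<in>?G. v u * v w - v u * v w * of_bool (fst u = fst w)
          - v u * v w * of_bool (snd u = snd w) + v u * v w * of_bool (id u = id w))"
    unfolding pair_form_def
    by (intro sum.cong refl) (auto simp: mem_Kn_edges_iff singleton_notin_Kn_edges prod_eq_iff)
  also have "\<dots> = (\<Sum>u\<in>?G. v u) * (\<Sum>w\<in>?G. v w) - ?S fst - ?S snd + ?S id"
    by (simp only: sum.distrib sum_subtractf sum_product)
  also have "fst ` ?G = {..<n}" "snd ` ?G = {..<n}" by force+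
  then have "?S fst = (\<Sum>i<n. (\<Sum>u\<in>?G. of_bool (fst u = i) * v u)\<^sup>2)"
    "?S snd = (\<Sum>j<n. (\<Sum>u\<in>?G. of_bool (snd u = j) * v u)\<^sup>2)"
    using sum_sum_of_bool_eq_fiber_squares[of ?G v fst] sum_sum_of_bool_eq_fiber_squares[of ?G v snd]
    by simp_all
  moreover have "?S id = (\<Sum>u\<in>?G. (v u)\<^sup>2)"
  proof (intro sum.cong refl)
    fix u assume "u \<in> ?G"
    then have "?G \<inter> {w. u = w} = {u}" by auto
    then show "(\<Sum>w\<in>?G. v u * v w * of_bool (id u = id w)) = (v u)\<^sup>2"
      by (simp add: power2_eq_square)
  qed
  ultimately show ?thesis by (simp add: power2_eq_square)
qed

definition equal_line_sums :: "nat \<Rightarrow> (nat \<times> nat \<Rightarrow> real) \<Rightarrow> bool" where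
  "equal_line_sums n v \<longleftrightarrow>
    (\<forall>i<n. (\<Sum>u\<in>grid n. of_bool (fst u = i) * v u) = (\<Sum>u\<in>grid n. of_bool (fst u = 0) * v u)) \<and>
    (\<forall>j<n. (\<Sum>u\<in>grid n. of_bool (snd u = j) * v u) = (\<Sum>u\<in>grid n. of_bool (snd u = 0) * v u))"

lemma pair_form_complete_graph_pos:
  assumes "2 \<le> n" and nonzero: "\<exists>u\<in>grid n. v u \<noteq> 0" and "equal_line_sums n v"
  shows "0 < pair_form (grid n) (Kn_edges n \<times> Kn_edges n) v"
proof -
  from \<open>equal_line_sums n v\<close>
  have rows: "\<forall>i<n. (\<Sum>u\<in>grid n. of_bool (fst u = i) * v u) = (\<Sum>u\<in>grid n. of_bool (fst u = 0) * v u)"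
    and cols: "\<forall>j<n. (\<Sum>u\<in>grid n. of_bool (snd u = j) * v u) = (\<Sum>u\<in>grid n. of_bool (snd u = 0) * v u)"
    unfolding equal_line_sums_def by blast+
  define r where "r = (\<Sum>u\<in>grid n. of_bool (fst u = 0) * v u)"
  define c where "c = (\<Sum>u\<in>grid n. of_bool (snd u = 0) * v u)"
  note rows = rows[folded r_def] and cols = cols[folded c_def]
  have "fst ` grid n = {..<n}" "snd ` grid n = {..<n}" by force+
  then have "(\<Sum>u\<in>grid n. v u) = n * r" "(\<Sum>u\<in>grid n. v u) = n * c"
    using sum_fiber_sums[of "grid n" fst v] sum_fiber_sums[of "grid n" snd v] rows cols
    by simp_all
  with assms(1) have "c = r" by simp
  have "(\<Sum>i<n. (\<Sum>u\<in>grid n. of_bool (fst u = i) * v u)\<^sup>2) = n * r\<^sup>2"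
    "(\<Sum>j<n. (\<Sum>u\<in>grid n. of_bool (snd u = j) * v u)\<^sup>2) = n * r\<^sup>2"
    using rows cols \<open>c = r\<close> by simp_all
  with \<open>(\<Sum>u\<in>grid n. v u) = n * r\<close>
  have "pair_form (grid n) (Kn_edges n \<times> Kn_edges n) v
      = (n * r)\<^sup>2 - n * r\<^sup>2 - n * r\<^sup>2 + (\<Sum>u\<in>grid n. (v u)\<^sup>2)"
    by (simp only: pair_form_complete_graph)
  also have "\<dots> = real n * (real n - 2) * r\<^sup>2 + (\<Sum>u\<in>grid n. (v u)\<^sup>2)"
    by (simp add: power2_eq_square algebra_simps)
  finally have "pair_form (grid n) (Kn_edges n \<times> Kn_edges n) v
      = real n * (real n - 2) * r\<^sup>2 + (\<Sum>u\<in>grid n. (v u)\<^sup>2)" .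
  moreover have "0 \<le> real n * (real n - 2) * r\<^sup>2" using assms(1) by simp
  moreover have "0 < (\<Sum>u\<in>grid n. (v u)\<^sup>2)"
  proof -
    from nonzero obtain u where "u \<in> grid n" "v u \<noteq> 0" by blast
    then show ?thesis by (intro sum_pos2[of "grid n" u]) auto
  qed
  ultimately show ?thesis by linarith
qed

lemma equal_line_sums_orthogonal_exists:
  fixes A :: "(nat \<times> nat \<Rightarrow> real) set"
  assumes "finite A" "card A + 2 * (n - 1) < n\<^sup>2"
  obtains v where "\<exists>u\<in>grid n. v u \<noteq> 0" "\<forall>\<alpha>\<in>A. (\<Sum>u\<in>grid n. \<alpha> u * v u) = 0"
    "equal_line_sums n v"
proof -
  define row where "row i u = (of_bool (fst u = i) - of_bool (fst u = 0) :: real)" for i and u :: "nat \<times> nat"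
  define col where "col j u = (of_bool (snd u = j) - of_bool (snd u = 0) :: real)" for j and u :: "nat \<times> nat"
  define C where "C = A \<union> row ` {1..<n} \<union> col ` {1..<n}"
  have "card C \<le> card A + card {1..<n} + card {1..<n}"
    unfolding C_def by (intro card_Un_le[THEN order_trans] add_mono card_image_le) auto
  also have "\<dots> < card (grid n)" using assms(2) by (simp add: power2_eq_square)
  finally obtain v where nonzero: "\<exists>u\<in>grid n. v u \<noteq> 0"
    and solution: "\<forall>c\<in>C. (\<Sum>u\<in>grid n. c u * v u) = 0"
    using underdetermined_system_nonzero_solution[of C "grid n"] assms(1) by (auto simp: C_def)
  have "(\<Sum>u\<in>grid n. of_bool (fst u = i) * v u) = (\<Sum>u\<in>grid n. of_bool (fst u = 0) * v u)"
    if "i < n" for i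
  proof (cases "i = 0")
    case False
    with that solution have "(\<Sum>u\<in>grid n. row i u * v u) = 0" by (auto simp: C_def)
    then show ?thesis by (simp add: row_def left_diff_distrib sum_subtractf)
  qed simp
  moreover have "(\<Sum>u\<in>grid n. of_bool (snd u = j) * v u) = (\<Sum>u\<in>grid n. of_bool (snd u = 0) * v u)"
    if "j < n" for j
  proof (cases "j = 0")
    case False
    with that solution have "(\<Sum>u\<in>grid n. col j u * v u) = 0" by (auto simp: C_def)
    then show ?thesis by (simp add: col_def left_diff_distrib sum_subtractf)
  qed simp
  ultimately have "equal_line_sums n v" unfolding equal_line_sums_def by blast
  moreover have "\<forall>\<alpha>\<in>A. (\<Sum>u\<in>grid n. \<alpha> u * v u) = 0" using solution by (simp add: C_def)
  ultimately show ?thesis using that nonzero by blast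
qed

lemma block_partition_card_lower_bound:
  assumes "2 \<le> n" and partition: "block_partition n P"
  shows "(n - 1)\<^sup>2 + 1 \<le> 2 * card P"
proof (rule ccontr)
  assume "\<not> ?thesis"
  then have few_blocks: "2 * card P + 2 * (n - 1) < n\<^sup>2"
    using assms(1) by (cases n) (auto simp: power2_eq_square)
  from partition have "finite P" and disjoint: "\<forall>B1\<in>P. \<forall>B2\<in>P. B1 \<noteq> B2 \<longrightarrow> B1 \<inter> B2 = {}"
    and cover: "\<Union>P = Kn_edges n \<times> Kn_edges n" and blocks: "\<forall>B\<in>P. is_block n B"
    unfolding block_partition_def by auto
  from blocks obtain \<alpha> \<beta> where kernel: "\<And>B I v. B \<in> P \<Longrightarrow> (\<Sum>u\<in>I. \<alpha> B u * v u) = 0 \<Longrightarrow>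
      (\<Sum>u\<in>I. \<beta> B u * v u) = 0 \<Longrightarrow> pair_form I B v = 0"
    using pair_form_block_kernel by metis
  have "card (\<alpha> ` P \<union> \<beta> ` P) + 2 * (n - 1) < n\<^sup>2"
    using card_Un_le[of "\<alpha> ` P" "\<beta> ` P"] card_image_le[OF \<open>finite P\<close>, of \<alpha>]
      card_image_le[OF \<open>finite P\<close>, of \<beta>] few_blocks by linarith
  then obtain v where "\<exists>u\<in>grid n. v u \<noteq> 0"
    and orthogonal: "\<forall>\<gamma>\<in>\<alpha> ` P \<union> \<beta> ` P. (\<Sum>u\<in>grid n. \<gamma> u * v u) = 0"
    and "equal_line_sums n v"
    by (rule equal_line_sums_orthogonal_exists[rotated]) (use \<open>finite P\<close> in auto)
  then have "0 < pair_form (grid n) (\<Union>P) v"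
    unfolding cover using pair_form_complete_graph_pos[OF assms(1)] by blast
  also have "pair_form (grid n) (\<Union>P) v = 0"
    using pair_form_Union[OF \<open>finite P\<close> disjoint] kernel orthogonal by simp
  finally show False by simp
qed

lemma block_partition_exists: "\<exists>P. block_partition n P"
proof -
  have "finite (Kn_edges n)"
    by (rule finite_subset[of _ "Pow {..<n}"]) (auto simp: Kn_edges_def)
  moreover have "is_cbs n {e}" if "e \<in> Kn_edges n" for e
  proof -
    from that obtain x y where "x < n" "y < n" "x \<noteq> y" "e = {x, y}" by (auto simp: Kn_edges_def)
    moreover have "bip_edges {x} {y} = {{x, y}}" by (auto simp: bip_edges_def)
    ultimately show ?thesis unfolding is_cbs_def by blast
  qed
  ultimately have "block_partition n ((\<lambda>p. {p}) ` (Kn_edges n \<times> Kn_edges n))"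
    unfolding block_partition_def is_block_def by auto
  then show ?thesis by blast
qed

theorem mainTheorem9:
  fixes n :: nat
  assumes "n \<ge> 2"
  shows "\<lceil>(real ((n - 1)^2) + 1) / 2\<rceil> \<le> int (g n)"
proof -
  have "\<exists>P. block_partition n P \<and> card P = g n"
    unfolding g_def by (rule LeastI_ex) (use block_partition_exists in blast)
  then obtain P where "block_partition n P" "card P = g n" by blast
  with assms have "(n - 1)\<^sup>2 + 1 \<le> 2 * g n"
    using block_partition_card_lower_bound by metis
  then have "real ((n - 1)\<^sup>2 + 1) \<le> real (2 * g n)"
    by (rule of_nat_mono)
  then have "(real ((n - 1)^2) + 1) / 2 \<le> real (g n)"
    by simp
  then show ?thesis by (simp add: ceiling_le_iff)
qed

end
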